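(* Let $u^a_i,u^b_i\in[0,1]$ ($i\in[m]$) be the utilities of two agents $a,b$ for $m$ items, and suppose $\mathrm{OptEnvy}\le-\Delta$ for some $\Delta>0$. Then for all $c>0$, $\sum_{i=1}^m|cu^a_i-u^b_i|\ge(1+c)\Delta$.
   Context: Utilities are additive. An allocation is a partition $(\mathcal{A}_a,\mathcal{A}_b)$ of $[m]$; $\mathrm{Envy}_{a\to b}=\sum_{i\in\mathcal{A}_b}u^a_i-\sum_{i\in\mathcal{A}_a}u^a_i$, $\mathrm{Envy}_{b\to a}=\sum_{i\in\mathcal{A}_a}u^b_i-\sum_{i\in\mathcal{A}_b}u^b_i$, $\mathrm{Envy}=\max\{\mathrm{Envy}_{a\to b},\mathrm{Envy}_{b\to a}\}$, and $\mathrm{OptEnvy}=\min$ of $\mathrm{Envy}$ over all allocations. *)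

theory Defs
  imports Complex_Main
begin

text \<open>Items are 0,...,m-1. An allocation (A_a, A_b) is a partition of the items;
  it is determined by A_a (a subset of the items), with A_b the complement.\<close>

definition envy_ab :: "nat \<Rightarrow> (nat \<Rightarrow> real) \<Rightarrow> nat set \<Rightarrow> real" where
  "envy_ab m ua Aa = (\<Sum>i\<in>{..<m} - Aa. ua i) - (\<Sum>i\<in>Aa. ua i)"

definition envy_ba :: "nat \<Rightarrow> (nat \<Rightarrow> real) \<Rightarrow> nat set \<Rightarrow> real" where
  "envy_ba m ub Aa = (\<Sum>i\<in>Aa. ub i) - (\<Sum>i\<in>{..<m} - Aa. ub i)"

definition envy :: "nat \<Rightarrow> (nat \<Rightarrow> real) \<Rightarrow> (nat \<Rightarrow> real) \<Rightarrow> nat set \<Rightarrow> real" where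
  "envy m ua ub Aa = max (envy_ab m ua Aa) (envy_ba m ub Aa)"

definition opt_envy :: "nat \<Rightarrow> (nat \<Rightarrow> real) \<Rightarrow> (nat \<Rightarrow> real) \<Rightarrow> real" where
  "opt_envy m ua ub = Min (envy m ua ub ` Pow {..<m})"

end

theory Submission
  imports Defs
begin

text \<open>Take an allocation \<open>A\<close> attaining OptEnvy. Splitting the sum over \<open>A\<close> and its
  complement and dropping the absolute values in the favourable direction on each part gives
  \<open>\<Sum>|c u\<^sup>a\<^sub>i - u\<^sup>b\<^sub>i| \<ge> - c Envy\<^sub>a\<^sub>\<rightarrow>\<^sub>b(A) - Envy\<^sub>b\<^sub>\<rightarrow>\<^sub>a(A) \<ge> (1 + c) \<Delta>\<close>.\<close>

lemma opt_envy_attained: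
  obtains A where "A \<subseteq> {..<m}" and "envy m ua ub A = opt_envy m ua ub"
proof -
  have "opt_envy m ua ub \<in> envy m ua ub ` Pow {..<m}"
    unfolding opt_envy_def by (rule Min_in) auto
  then show ?thesis using that by auto
qed

lemma sum_abs_diff_ge_envy:
  fixes ua ub :: "nat \<Rightarrow> real" and c :: real
  assumes "A \<subseteq> {..<m}"
  shows "(\<Sum>i<m. \<bar>c * ua i - ub i\<bar>) \<ge> - c * envy_ab m ua A - envy_ba m ub A"
proof -
  let ?B = "{..<m} - A"
  have "(\<Sum>i<m. \<bar>c * ua i - ub i\<bar>)
      = (\<Sum>i\<in>A. \<bar>c * ua i - ub i\<bar>) + (\<Sum>i\<in>?B. \<bar>c * ua i - ub i\<bar>)"
    using assms by (metis add.commute finite_lessThan sum.subset_diff)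
  also have "\<dots> \<ge> (\<Sum>i\<in>A. c * ua i - ub i) + (\<Sum>i\<in>?B. ub i - c * ua i)"
    by (intro add_mono sum_mono) auto
  also have "(\<Sum>i\<in>A. c * ua i - ub i) + (\<Sum>i\<in>?B. ub i - c * ua i)
      = - c * envy_ab m ua A - envy_ba m ub A"
    unfolding envy_ab_def envy_ba_def
    by (simp add: sum_subtractf sum_negf sum_distrib_left algebra_simps)
  finally show ?thesis .
qed

theorem lemma10:
  fixes m :: nat and ua ub :: "nat \<Rightarrow> real" and \<Delta> c :: real
  assumes "\<forall>i<m. 0 \<le> ua i \<and> ua i \<le> 1"
    and "\<forall>i<m. 0 \<le> ub i \<and> ub i \<le> 1"
    and "\<Delta> > 0"
    and "opt_envy m ua ub \<le> - \<Delta>"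
    and "c > 0"
  shows "(\<Sum>i<m. \<bar>c * ua i - ub i\<bar>) \<ge> (1 + c) * \<Delta>"
proof -
  obtain A where A: "A \<subseteq> {..<m}" and opt: "envy m ua ub A = opt_envy m ua ub"
    by (rule opt_envy_attained)
  have ab: "envy_ab m ua A \<le> - \<Delta>" and ba: "envy_ba m ub A \<le> - \<Delta>"
    using opt assms(4) unfolding envy_def by auto
  have "c * \<Delta> \<le> c * - envy_ab m ua A"
    using ab assms(5) by (intro mult_left_mono) auto
  then have "(1 + c) * \<Delta> \<le> - c * envy_ab m ua A - envy_ba m ub A"
    using ba by (simp add: algebra_simps)
  also have "\<dots> \<le> (\<Sum>i<m. \<bar>c * ua i - ub i\<bar>)"
    using A by (rule sum_abs_diff_ge_envy)
  finally show ?thesis .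
qed

end
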